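(* Suppose that bounded operators $B(x):\mathbb C^2\to\mathcal K$, $C(x):\mathcal K\to\mathbb C^2$, $\mathbb X(x):\mathcal K\to\mathcal K$, differentiable in $x\in\mathbb R$, satisfy $\frac{\partial}{\partial x}B(x)=-(AB\sigma_2+B\gamma)\sigma_1^{-1}$, $\frac{\partial}{\partial x}C(x)u=\sigma_1^{-1}(-\sigma_2 C A_\zeta u+\gamma C u)$ for all $u\in D(A_\zeta)$, and $\frac{\partial}{\partial x}\mathbb X=B\sigma_2C$, and that $\mathbb X(x)(D(A_\zeta))\subseteq D(A)$ for all $x\in\mathbb R$. If the Lyapunov equation $A\mathbb X(x)u+\mathbb X(x)A_\zeta u+B(x)\sigma_1C(x)u=0$ (for all $u\in D(A)$) holds for a fixed $x_0$, then it holds for all $x$. In the case the operator $\mathbb X(x)$ is invertible and $B(x),C(x),\mathbb X(x)$ are part of an invertible node, if the equation $A_\zeta\mathbb X^{-1}(x)u'+\mathbb X^{-1}(x)Au'+\mathbb X^{-1}(x)B(x)\sigma_1C(x)\mathbb X^{-1}(x)u'=0$ (for all $u'\in D(A)$) holds for a fixed $x_0$, then it holds for all $x$.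
   Context: $\mathcal K$ is a Krein space; $A,A_\zeta$ are generators of $C_0$ groups on $\mathcal K$ with identical dense domain $D(A)=D(A_\zeta)$; $\sigma_1=\sigma_1^*$ is an invertible $2\times2$ matrix, $\sigma_2=\sigma_2^*$ and $\gamma=-\gamma^*$ are fixed $2\times2$ matrices; $B(x)\sigma_2$ is $A$-regular, i.e. $B(x)\sigma_2 e\in D(A)$ for all $e\in\mathbb C^2$. An invertible node means: $\mathbb X$ is invertible with $\mathbb X(D(A))\subseteq D(A)$ and $\mathbb X^{-1}(D(A))\subseteq D(A)$, and the Lyapunov equation $A\mathbb Xu+\mathbb XA_\zeta u+B\sigma_1Cu=0$ holds for $u\in D(A)$. *)

theory Defs
  imports "HOL-Analysis.Analysis"
begin

text \<open>HOL-Analysis has no complex normed vector spaces, so the complex Banach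
space underlying the Krein space is modelled as a real Banach space together
with a complex structure I (multiplication by the imaginary unit).\<close>

definition complex_structure :: "('k::real_normed_vector \<Rightarrow> 'k) \<Rightarrow> bool" where
  "complex_structure I \<longleftrightarrow> bounded_linear I \<and> (\<forall>u. I (I u) = - u)"

definition cscale :: "('k::real_vector \<Rightarrow> 'k) \<Rightarrow> complex \<Rightarrow> 'k \<Rightarrow> 'k" where
  "cscale I c u = Re c *\<^sub>R u + Im c *\<^sub>R I u"

definition commutes_I :: "('a \<Rightarrow> 'a) \<Rightarrow> ('b \<Rightarrow> 'b) \<Rightarrow> ('a \<Rightarrow> 'b) \<Rightarrow> bool" where
  "commutes_I I1 I2 f \<longleftrightarrow> (\<forall>u. f (I1 u) = I2 (f u))"

definition iC2 :: "complex^2 \<Rightarrow> complex^2" where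
  "iC2 v = \<i> *s v"

definition krein_space ::
  "('k::{real_normed_vector,banach} \<Rightarrow> 'k) \<Rightarrow> ('k \<Rightarrow> 'k \<Rightarrow> complex) \<Rightarrow> ('k \<Rightarrow> 'k) \<Rightarrow> bool" where
  "krein_space I form J \<longleftrightarrow>
     complex_structure I \<and>
     (\<forall>u v w. form (u + v) w = form u w + form v w) \<and>
     (\<forall>c u w. form (cscale I c u) w = c * form u w) \<and>
     (\<forall>u v. form u v = cnj (form v u)) \<and>
     bounded_linear J \<and> commutes_I I I J \<and> (\<forall>u. J (J u) = u) \<and>
     (\<forall>u v. form (J u) v = form u (J v)) \<and>
     (\<forall>u. form (J u) u = complex_of_real ((norm u)\<^sup>2))"

definition C0_group :: "('k::{real_normed_vector,banach} \<Rightarrow> 'k) \<Rightarrow> (real \<Rightarrow> ('k \<Rightarrow>\<^sub>L 'k)) \<Rightarrow> bool" where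
  "C0_group I T \<longleftrightarrow>
     T 0 = id_blinfun \<and>
     (\<forall>s t. T (s + t) = T s o\<^sub>L T t) \<and>
     (\<forall>u. continuous_on UNIV (\<lambda>t. T t u)) \<and>
     (\<forall>t. commutes_I I I (blinfun_apply (T t)))"

definition generator :: "(real \<Rightarrow> ('k::{real_normed_vector,banach} \<Rightarrow>\<^sub>L 'k)) \<Rightarrow> 'k set \<Rightarrow> ('k \<Rightarrow> 'k) \<Rightarrow> bool" where
  "generator T D A \<longleftrightarrow>
     D = {u. \<exists>v. ((\<lambda>t. T t u) has_vector_derivative v) (at 0)} \<and>
     (\<forall>u\<in>D. ((\<lambda>t. T t u) has_vector_derivative A u) (at 0))"

definition generates_C0_group :: "('k::{real_normed_vector,banach} \<Rightarrow> 'k) \<Rightarrow> 'k set \<Rightarrow> ('k \<Rightarrow> 'k) \<Rightarrow> bool" where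
  "generates_C0_group I D A \<longleftrightarrow> (\<exists>T. C0_group I T \<and> generator T D A)"

definition mat_adj :: "complex^2^2 \<Rightarrow> complex^2^2" where
  "mat_adj M = (\<chi> i j. cnj (M $ j $ i))"

definition lyapunov_eq ::
  "('k \<Rightarrow> 'k) \<Rightarrow> ('k \<Rightarrow> 'k) \<Rightarrow> 'k set \<Rightarrow> complex^2^2 \<Rightarrow>
   ((complex^2) \<Rightarrow>\<^sub>L 'k::real_normed_vector) \<Rightarrow> ('k \<Rightarrow>\<^sub>L (complex^2)) \<Rightarrow> ('k \<Rightarrow>\<^sub>L 'k) \<Rightarrow> bool" where
  "lyapunov_eq A A\<^sub>\<zeta> D \<sigma>\<^sub>1 B C X \<longleftrightarrow>
     (\<forall>u\<in>D. A (X u) + X (A\<^sub>\<zeta> u) + B (\<sigma>\<^sub>1 *v C u) = 0)"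

definition inv_lyapunov_eq ::
  "('k \<Rightarrow> 'k) \<Rightarrow> ('k \<Rightarrow> 'k) \<Rightarrow> 'k set \<Rightarrow> complex^2^2 \<Rightarrow>
   ((complex^2) \<Rightarrow>\<^sub>L 'k::real_normed_vector) \<Rightarrow> ('k \<Rightarrow>\<^sub>L (complex^2)) \<Rightarrow> ('k \<Rightarrow>\<^sub>L 'k) \<Rightarrow> bool" where
  "inv_lyapunov_eq A A\<^sub>\<zeta> D \<sigma>\<^sub>1 B C X \<longleftrightarrow>
     (let Xi = inv (blinfun_apply X) in
      \<forall>u'\<in>D. A\<^sub>\<zeta> (Xi u') + Xi (A u') + Xi (B (\<sigma>\<^sub>1 *v C (Xi u'))) = 0)"

definition invertible_node ::
  "('k \<Rightarrow> 'k) \<Rightarrow> ('k \<Rightarrow> 'k) \<Rightarrow> 'k set \<Rightarrow> complex^2^2 \<Rightarrow>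
   ((complex^2) \<Rightarrow>\<^sub>L 'k::real_normed_vector) \<Rightarrow> ('k \<Rightarrow>\<^sub>L (complex^2)) \<Rightarrow> ('k \<Rightarrow>\<^sub>L 'k) \<Rightarrow> bool" where
  "invertible_node A A\<^sub>\<zeta> D \<sigma>\<^sub>1 B C X \<longleftrightarrow>
     bij (blinfun_apply X) \<and> X ` D \<subseteq> D \<and> inv (blinfun_apply X) ` D \<subseteq> D \<and>
     lyapunov_eq A A\<^sub>\<zeta> D \<sigma>\<^sub>1 B C X"

end

theory Submission
  imports Defs
begin

text \<open>Formally, differentiating the Lyapunov residual \<open>A X u + X A\<^sub>\<zeta> u + B \<sigma>\<^sub>1 C u\<close>
in \<open>x\<close> gives \<open>A Y' + g'\<close> with \<open>Y = X u\<close>, \<open>Y' = B \<sigma>\<^sub>2 C u \<in> D(A)\<close> and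
\<open>g' = - A Y'\<close>, so the residual is constant. Since \<open>A\<close> is unbounded this is made rigorous
by applying the bounded operators \<open>L\<^sub>t = \<integral>\<^sub>0\<^sup>t T(r) dr\<close>, where \<open>T\<close> is the group generated
by \<open>A\<close>: as \<open>L\<^sub>t A = T(t) - 1\<close> on \<open>D(A)\<close>, the function \<open>L\<^sub>t\<close>(residual) is
differentiable with derivative zero, and \<open>L\<^sub>t q = 0\<close> for all small \<open>t \<ge> 0\<close> forces
\<open>q = 0\<close> because \<open>(d/dt) L\<^sub>t q = q\<close> at \<open>t = 0\<close>.
Boundedness of \<open>L\<^sub>t\<close> rests on the uniform boundedness principle. For an invertible
node, applying \<open>X\<^sup>-\<^sup>1\<close> to the Lyapunov equation at \<open>X\<^sup>-\<^sup>1 u'\<close> gives the inverse equation.\<close>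

lemma complete_space_closed_cover_interior:
  fixes F :: "nat \<Rightarrow> 'a::complete_space set"
  assumes closed: "\<And>n. closed (F n)" and cover: "\<Union>(range F) = UNIV"
  shows "\<exists>n. interior (F n) \<noteq> {}"
proof (rule ccontr)
  assume "\<not> (\<exists>n. interior (F n) \<noteq> {})"
  then have "euclidean interior_of \<Union>(range F) = {}"
    by (intro Baire_category_alt) (auto simp: completely_metrizable_space_euclidean closed)
  then show False
    using cover by simp
qed

lemma norm_blinfun_le_of_ball:
  fixes T :: "'a::real_normed_vector \<Rightarrow>\<^sub>L 'b::real_normed_vector"
  assumes e: "e > 0" and ball: "\<And>v. v \<in> ball v\<^sub>0 e \<Longrightarrow> norm (T v) \<le> c"
  shows "norm T \<le> 4 * c / e"
proof (rule norm_blinfun_bound)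
  show "0 \<le> 4 * c / e"
    using ball[of v\<^sub>0] e by (simp add: order_trans[OF norm_ge_zero])
next
  fix y :: 'a
  show "norm (T y) \<le> 4 * c / e * norm y"
  proof (cases "y = 0")
    case True
    then show ?thesis by simp
  next
    case False
    define y' where "y' = (e / 2 / norm y) *\<^sub>R y"
    have "norm y' = e / 2"
      using False e by (simp add: y'_def)
    then have "norm (T (v\<^sub>0 + y')) \<le> c" "norm (T v\<^sub>0) \<le> c"
      using e by (auto intro!: ball simp: dist_norm)
    moreover have "T y' = T (v\<^sub>0 + y') - T v\<^sub>0"
      by (simp add: blinfun.add_right)
    ultimately have "norm (T y') \<le> 2 * c"
      using norm_triangle_ineq4[of "T (v\<^sub>0 + y')" "T v\<^sub>0"] by simp
    moreover have "T y' = (e / 2 / norm y) *\<^sub>R T y"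
      by (simp add: y'_def blinfun.scaleR_right)
    ultimately have "(e / 2 / norm y) * norm (T y) \<le> 2 * c"
      using e by simp
    then show ?thesis
      using e False by (simp add: field_simps)
  qed
qed

theorem uniform_boundedness:
  fixes S :: "('a::banach \<Rightarrow>\<^sub>L 'b::real_normed_vector) set"
  assumes bounded: "\<And>v. bounded ((\<lambda>T. blinfun_apply T v) ` S)"
  shows "\<exists>M. \<forall>T\<in>S. norm T \<le> M"
proof -
  define F where "F n = (\<Inter>T\<in>S. {v. norm (blinfun_apply T v) \<le> real n})" for n :: nat
  have "closed (F n)" for n
    unfolding F_def by (intro closed_INT ballI closed_Collect_le continuous_intros)
  moreover have "\<Union>(range F) = UNIV"
  proof -
    have "v \<in> \<Union>(range F)" for v
    proof -
      obtain c where "\<forall>w\<in>(\<lambda>T. blinfun_apply T v) ` S. norm w \<le> c"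
        using bounded[of v] unfolding bounded_iff by blast
      then have "v \<in> F (nat \<lceil>c\<rceil>)"
        using real_nat_ceiling_ge[of c] unfolding F_def by force
      then show ?thesis by blast
    qed
    then show ?thesis by blast
  qed
  ultimately obtain n where "interior (F n) \<noteq> {}"
    using complete_space_closed_cover_interior by blast
  then obtain v\<^sub>0 e where "e > 0" "ball v\<^sub>0 e \<subseteq> F n"
    using mem_interior by blast
  then have "norm T \<le> 4 * real n / e" if "T \<in> S" for T
    using that by (intro norm_blinfun_le_of_ball) (auto simp: F_def)
  then show ?thesis by blast
qed

lemma C0_group_continuous_on:
  assumes "C0_group I T"
  shows "continuous_on S (\<lambda>r. blinfun_apply (T r) v)"
  using assms unfolding C0_group_def by (meson continuous_on_subset top_greatest)

lemma C0_group_bounded_on_compact: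
  fixes T :: "real \<Rightarrow> ('k::banach \<Rightarrow>\<^sub>L 'k)"
  assumes "C0_group I T" and "compact K"
  shows "\<exists>M. \<forall>r\<in>K. norm (T r) \<le> M"
proof -
  have "\<exists>M. \<forall>S\<in>T ` K. norm S \<le> M"
  proof (rule uniform_boundedness)
    fix v
    have "bounded ((\<lambda>r. T r v) ` K)"
      using C0_group_continuous_on[OF assms(1)] assms(2) by (intro compact_imp_bounded compact_continuous_image)
    then show "bounded ((\<lambda>S. blinfun_apply S v) ` T ` K)"
      by (simp add: image_image)
  qed
  then show ?thesis by blast
qed

lemma C0_group_has_vector_derivative:
  fixes T :: "real \<Rightarrow> ('k::banach \<Rightarrow>\<^sub>L 'k)"
  assumes G: "C0_group I T" and gen: "generator T D A" and y: "y \<in> D"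
  shows "((\<lambda>r. T r y) has_vector_derivative T r (A y)) (at r)"
proof -
  have "((\<lambda>h. T h y) has_vector_derivative A y) (at 0)"
    using gen y unfolding generator_def by blast
  then have "((\<lambda>h. T r (T h y)) has_vector_derivative T r (A y)) (at 0)"
    by (rule bounded_linear.has_vector_derivative[OF blinfun.bounded_linear_right])
  moreover have "T r (T h y) = T (r + h) y" for h
    using G unfolding C0_group_def by simp
  ultimately have "((\<lambda>h. T (r + h) y) has_vector_derivative T r (A y)) (at 0)"
    by simp
  then have "(((\<lambda>h. T (r + h) y) \<circ> (\<lambda>s. s - r)) has_vector_derivative 1 *\<^sub>R T r (A y)) (at r)"
    by (intro vector_diff_chain_at) (auto intro!: derivative_eq_intros)
  then show ?thesis
    by (simp add: o_def)
qed

definition integrated_group :: "(real \<Rightarrow> ('k::banach \<Rightarrow>\<^sub>L 'k)) \<Rightarrow> real \<Rightarrow> 'k \<Rightarrow> 'k" where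
  "integrated_group T t v = integral {0..t} (\<lambda>r. T r v)"

lemma integrated_group_generator:
  fixes T :: "real \<Rightarrow> ('k::banach \<Rightarrow>\<^sub>L 'k)"
  assumes G: "C0_group I T" and gen: "generator T D A" and y: "y \<in> D" and t: "0 \<le> t"
  shows "integrated_group T t (A y) = T t y - y"
proof -
  have "((\<lambda>r. T r (A y)) has_integral T t y - T 0 y) {0..t}"
    using C0_group_has_vector_derivative[OF G gen y] t
    by (intro fundamental_theorem_of_calculus) (auto intro: has_vector_derivative_at_within)
  moreover have "T 0 y = y"
    using G by (simp add: C0_group_def)
  ultimately show ?thesis
    by (simp add: integrated_group_def integral_unique)
qed

lemma integrated_group_bounded_linear:
  fixes T :: "real \<Rightarrow> ('k::banach \<Rightarrow>\<^sub>L 'k)"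
  assumes G: "C0_group I T" and t: "0 \<le> t"
  shows "bounded_linear (integrated_group T t)"
proof -
  note cont = C0_group_continuous_on[OF G, of "{0..t}"]
  obtain M where M: "\<And>r. r \<in> {0..t} \<Longrightarrow> norm (T r) \<le> M"
    using C0_group_bounded_on_compact[OF G compact_Icc] by blast
  show ?thesis
  proof (rule bounded_linear_intro)
    show "integrated_group T t (v + w) = integrated_group T t v + integrated_group T t w" for v w
      unfolding integrated_group_def
      by (simp add: blinfun.add_right integral_add integrable_continuous_real[OF cont])
    show "integrated_group T t (c *\<^sub>R v) = c *\<^sub>R integrated_group T t v" for c v
      unfolding integrated_group_def by (simp add: blinfun.scaleR_right)
    show "norm (integrated_group T t v) \<le> norm v * (M * t)" for v
    proof -
      have "norm (T r v) \<le> M * norm v" if "r \<in> {0..t}" for r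
        using M[OF that] by (meson norm_blinfun mult_right_mono norm_ge_zero order_trans)
      then have "norm (integrated_group T t v) \<le> M * norm v * (t - 0)"
        unfolding integrated_group_def using t cont by (intro integral_bound) auto
      then show ?thesis
        by (simp add: algebra_simps)
    qed
  qed
qed

lemma integrated_group_eq_0_imp_eq_0:
  fixes T :: "real \<Rightarrow> ('k::banach \<Rightarrow>\<^sub>L 'k)"
  assumes G: "C0_group I T" and e: "e > 0"
    and vanish: "\<And>t. t \<in> {0..e} \<Longrightarrow> integrated_group T t q = 0"
  shows "q = 0"
proof -
  have "((\<lambda>t. integrated_group T t q) has_vector_derivative T 0 q) (at 0 within {0..e})"
    unfolding integrated_group_def using e
    by (intro integral_has_vector_derivative C0_group_continuous_on[OF G]) auto
  moreover have "((\<lambda>t. integrated_group T t q) has_vector_derivative 0) (at 0 within {0..e})"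
    by (rule has_vector_derivative_transform[of 0 _ _ "\<lambda>_. 0"]) (use e vanish in auto)
  moreover have "at 0 within {0..e} \<noteq> bot"
    using e by (simp add: at_within_Icc_at_right)
  ultimately have "T 0 q = 0"
    using vector_derivative_unique_within by blast
  then show ?thesis
    using G by (simp add: C0_group_def)
qed

lemma generator_comp_plus_constant:
  fixes T :: "real \<Rightarrow> ('k::banach \<Rightarrow>\<^sub>L 'k)" and Y Y' g :: "real \<Rightarrow> 'k"
  assumes G: "C0_group I T" and gen: "generator T D A"
    and Y_deriv: "\<And>s. (Y has_vector_derivative Y' s) (at s)"
    and Y_dom: "\<And>s. Y s \<in> D" and Y'_dom: "\<And>s. Y' s \<in> D"
    and g_deriv: "\<And>s. (g has_vector_derivative - A (Y' s)) (at s)"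
  shows "A (Y x) + g x = A (Y x\<^sub>0) + g x\<^sub>0"
proof -
  define q where "q = A (Y x) + g x - (A (Y x\<^sub>0) + g x\<^sub>0)"
  have integrated_q: "integrated_group T t q = 0" if t: "t \<in> {0..1}" for t
  proof -
    interpret L: bounded_linear "integrated_group T t"
      using integrated_group_bounded_linear[OF G] t by simp
    have LA: "integrated_group T t (A y) = T t y - y" if "y \<in> D" for y
      using integrated_group_generator[OF G gen that] t by simp
    \<comment> \<open>\<open>P s = L\<^sub>t (A (Y s) + g s)\<close>, written without \<open>A\<close> so that it can be differentiated.\<close>
    define P where "P s = T t (Y s) + integrated_group T t (g s) - Y s" for s
    have "(P has_vector_derivative
            T t (Y' s) + integrated_group T t (- A (Y' s)) - Y' s) (at s)" for s
      unfolding P_def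
      by (intro derivative_intros L.has_vector_derivative Y_deriv g_deriv
            bounded_linear.has_vector_derivative[OF blinfun.bounded_linear_right])
    moreover have "T t (Y' s) + integrated_group T t (- A (Y' s)) - Y' s = 0" for s
      using LA[OF Y'_dom] by (simp add: L.neg)
    ultimately have "(P has_derivative (\<lambda>h. 0)) (at s within UNIV)" for s
      unfolding has_vector_derivative_def by simp
    then obtain c where "\<forall>s\<in>UNIV. P s = c"
      using has_derivative_zero_constant[of UNIV P] by auto
    then have "P x = P x\<^sub>0"
      by simp
    then have "integrated_group T t (A (Y x)) + integrated_group T t (g x)
             = integrated_group T t (A (Y x\<^sub>0)) + integrated_group T t (g x\<^sub>0)"
      unfolding P_def LA[OF Y_dom] by (simp add: algebra_simps)
    then show ?thesis
      unfolding q_def by (simp add: L.add L.diff)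
  qed
  have "q = 0"
    by (rule integrated_group_eq_0_imp_eq_0[OF G zero_less_one integrated_q])
  then show ?thesis
    unfolding q_def by simp
qed

lemma matrix_inv_cancel:
  fixes M :: "'a::field^'n^'n"
  assumes "invertible M"
  shows "M *v (matrix_inv M *v w) = w" and "matrix_inv M *v (M *v w) = w"
proof -
  have "M ** matrix_inv M = mat 1 \<and> matrix_inv M ** M = mat 1"
    using assms unfolding invertible_def matrix_inv_def by (rule someI_ex)
  then show "M *v (matrix_inv M *v w) = w" and "matrix_inv M *v (M *v w) = w"
    by (simp_all add: matrix_vector_mul_assoc)
qed

lemma lyapunov_remainder_has_vector_derivative:
  fixes A A\<^sub>\<zeta> :: "'k::banach \<Rightarrow> 'k" and \<sigma>\<^sub>1 \<sigma>\<^sub>2 \<gamma> :: "complex^2^2"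
    and B B' :: "real \<Rightarrow> ((complex^2) \<Rightarrow>\<^sub>L 'k)"
    and C C' :: "real \<Rightarrow> ('k \<Rightarrow>\<^sub>L (complex^2))"
    and X X' :: "real \<Rightarrow> ('k \<Rightarrow>\<^sub>L 'k)"
  assumes \<sigma>\<^sub>1_inv: "invertible \<sigma>\<^sub>1"
    and B_deriv: "(B has_vector_derivative B' s) (at s)"
    and C_deriv: "(C has_vector_derivative C' s) (at s)"
    and X_deriv: "(X has_vector_derivative X' s) (at s)"
    and B'_eq: "\<And>e. B' s e =
          - (A (B s (\<sigma>\<^sub>2 *v (matrix_inv \<sigma>\<^sub>1 *v e))) + B s (\<gamma> *v (matrix_inv \<sigma>\<^sub>1 *v e)))"
    and C'_eq: "C' s u = matrix_inv \<sigma>\<^sub>1 *v (- (\<sigma>\<^sub>2 *v C s (A\<^sub>\<zeta> u)) + \<gamma> *v C s u)"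
    and X'_eq: "\<And>v. X' s v = B s (\<sigma>\<^sub>2 *v C s v)"
  shows "((\<lambda>s. X s (A\<^sub>\<zeta> u) + B s (\<sigma>\<^sub>1 *v C s u)) has_vector_derivative - A (X' s u)) (at s)"
proof -
  have "((\<lambda>s. \<sigma>\<^sub>1 *v C s u) has_vector_derivative \<sigma>\<^sub>1 *v C' s u) (at s)"
    by (intro bounded_linear.has_vector_derivative[OF matrix_vector_mul_bounded_linear]
          bounded_linear.has_vector_derivative[OF blinfun.bounded_linear_left C_deriv])
  then have "((\<lambda>s. X s (A\<^sub>\<zeta> u) + B s (\<sigma>\<^sub>1 *v C s u)) has_vector_derivative
              X' s (A\<^sub>\<zeta> u) + (B s (\<sigma>\<^sub>1 *v C' s u) + B' s (\<sigma>\<^sub>1 *v C s u))) (at s)"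
    by (intro derivative_intros blinfun.has_vector_derivative[OF B_deriv]
          bounded_linear.has_vector_derivative[OF blinfun.bounded_linear_left X_deriv])
  moreover have "X' s (A\<^sub>\<zeta> u) + (B s (\<sigma>\<^sub>1 *v C' s u) + B' s (\<sigma>\<^sub>1 *v C s u)) = - A (X' s u)"
    by (simp add: X'_eq B'_eq C'_eq matrix_inv_cancel[OF \<sigma>\<^sub>1_inv]
          blinfun.add_right blinfun.minus_right blinfun.diff_right)
  ultimately show ?thesis
    by simp
qed

lemma lyapunov_eq_propagates:
  fixes I :: "'k::banach \<Rightarrow> 'k" and A A\<^sub>\<zeta> :: "'k \<Rightarrow> 'k" and D :: "'k set"
    and \<sigma>\<^sub>1 \<sigma>\<^sub>2 \<gamma> :: "complex^2^2"
    and B B' :: "real \<Rightarrow> ((complex^2) \<Rightarrow>\<^sub>L 'k)"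
    and C C' :: "real \<Rightarrow> ('k \<Rightarrow>\<^sub>L (complex^2))"
    and X X' :: "real \<Rightarrow> ('k \<Rightarrow>\<^sub>L 'k)"
  assumes genA: "generates_C0_group I D A" and \<sigma>\<^sub>1_inv: "invertible \<sigma>\<^sub>1"
    and A_regular: "\<And>x e. B x (\<sigma>\<^sub>2 *v e) \<in> D"
    and B_deriv: "\<And>x. (B has_vector_derivative B' x) (at x)"
    and C_deriv: "\<And>x. (C has_vector_derivative C' x) (at x)"
    and X_deriv: "\<And>x. (X has_vector_derivative X' x) (at x)"
    and B'_eq: "\<And>x e. B' x e =
          - (A (B x (\<sigma>\<^sub>2 *v (matrix_inv \<sigma>\<^sub>1 *v e))) + B x (\<gamma> *v (matrix_inv \<sigma>\<^sub>1 *v e)))"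
    and C'_eq: "\<And>x u. u \<in> D \<Longrightarrow> C' x u =
          matrix_inv \<sigma>\<^sub>1 *v (- (\<sigma>\<^sub>2 *v C x (A\<^sub>\<zeta> u)) + \<gamma> *v C x u)"
    and X'_eq: "\<And>x u. X' x u = B x (\<sigma>\<^sub>2 *v C x u)"
    and X_dom: "\<And>x. X x ` D \<subseteq> D"
    and lyap: "lyapunov_eq A A\<^sub>\<zeta> D \<sigma>\<^sub>1 (B x\<^sub>0) (C x\<^sub>0) (X x\<^sub>0)"
  shows "lyapunov_eq A A\<^sub>\<zeta> D \<sigma>\<^sub>1 (B x) (C x) (X x)"
  unfolding lyapunov_eq_def
proof
  fix u assume u: "u \<in> D"
  obtain T where G: "C0_group I T" and gen: "generator T D A"
    using genA unfolding generates_C0_group_def by blast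
  define g where "g s = X s (A\<^sub>\<zeta> u) + B s (\<sigma>\<^sub>1 *v C s u)" for s
  have "A (X x u) + g x = A (X x\<^sub>0 u) + g x\<^sub>0"
  proof (rule generator_comp_plus_constant[OF G gen])
    show "((\<lambda>s. X s u) has_vector_derivative X' s u) (at s)" for s
      by (rule bounded_linear.has_vector_derivative[OF blinfun.bounded_linear_left X_deriv])
    show "X s u \<in> D" for s
      using X_dom u by blast
    show "X' s u \<in> D" for s
      unfolding X'_eq by (rule A_regular)
    show "(g has_vector_derivative - A (X' s u)) (at s)" for s
      unfolding g_def
      by (rule lyapunov_remainder_has_vector_derivative
            [where A=A and \<sigma>\<^sub>2=\<sigma>\<^sub>2 and \<gamma>=\<gamma> and B'=B' and C'=C'])
        (simp_all add: \<sigma>\<^sub>1_inv B_deriv C_deriv X_deriv B'_eq C'_eq u X'_eq)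
  qed
  also have "\<dots> = 0"
    using lyap u unfolding lyapunov_eq_def g_def by (simp add: add.assoc)
  finally show "A (X x u) + X x (A\<^sub>\<zeta> u) + B x (\<sigma>\<^sub>1 *v C x u) = 0"
    unfolding g_def by (simp add: add.assoc)
qed

lemma inv_lyapunov_eq_of_lyapunov_eq:
  fixes X :: "'k::real_normed_vector \<Rightarrow>\<^sub>L 'k"
  assumes bij: "bij (blinfun_apply X)" and inv_dom: "inv (blinfun_apply X) ` D \<subseteq> D"
    and lyap: "lyapunov_eq A A\<^sub>\<zeta> D \<sigma>\<^sub>1 B C X"
  shows "inv_lyapunov_eq A A\<^sub>\<zeta> D \<sigma>\<^sub>1 B C X"
  unfolding inv_lyapunov_eq_def Let_def
proof
  define Xi where "Xi = inv (blinfun_apply X)"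
  have X_Xi: "X (Xi v) = v" for v
    using bij unfolding Xi_def by (simp add: bij_is_surj surj_f_inv_f)
  have Xi_X: "Xi (X v) = v" for v
    using bij unfolding Xi_def by (simp add: bij_is_inj inv_f_f)
  have Xi_add: "Xi (v + w) = Xi v + Xi w" for v w
    by (metis Xi_X X_Xi blinfun.add_right)
  have Xi_0: "Xi 0 = 0"
    by (metis Xi_X blinfun.zero_right)
  fix u' assume "u' \<in> D"
  then have "A (X (Xi u')) + X (A\<^sub>\<zeta> (Xi u')) + B (\<sigma>\<^sub>1 *v C (Xi u')) = 0"
    using lyap inv_dom unfolding lyapunov_eq_def Xi_def by blast
  then have "Xi (A u' + X (A\<^sub>\<zeta> (Xi u')) + B (\<sigma>\<^sub>1 *v C (Xi u'))) = 0"
    by (simp add: X_Xi Xi_0)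
  then have "Xi (A u') + A\<^sub>\<zeta> (Xi u') + Xi (B (\<sigma>\<^sub>1 *v C (Xi u'))) = 0"
    by (simp add: Xi_add Xi_X)
  then show "A\<^sub>\<zeta> (Xi u') + Xi (A u') + Xi (B (\<sigma>\<^sub>1 *v C (Xi u'))) = 0"
    by (simp add: algebra_simps)
qed

theorem mainTheorem4:
  fixes I :: "'k::{real_normed_vector,banach} \<Rightarrow> 'k"
    and form :: "'k \<Rightarrow> 'k \<Rightarrow> complex" and J :: "'k \<Rightarrow> 'k"
    and A A\<^sub>\<zeta> :: "'k \<Rightarrow> 'k" and D :: "'k set"
    and \<sigma>\<^sub>1 \<sigma>\<^sub>2 \<gamma> :: "complex^2^2"
    and B B' :: "real \<Rightarrow> ((complex^2) \<Rightarrow>\<^sub>L 'k)"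
    and C C' :: "real \<Rightarrow> ('k \<Rightarrow>\<^sub>L (complex^2))"
    and X X' :: "real \<Rightarrow> ('k \<Rightarrow>\<^sub>L 'k)"
    and x\<^sub>0 :: real
  assumes krein: "krein_space I form J"
    and genA: "generates_C0_group I D A"
    and genA\<^sub>\<zeta>: "generates_C0_group I D A\<^sub>\<zeta>"
    and dense: "closure D = UNIV"
    and \<sigma>\<^sub>1_sa: "mat_adj \<sigma>\<^sub>1 = \<sigma>\<^sub>1" and \<sigma>\<^sub>1_inv: "invertible \<sigma>\<^sub>1"
    and \<sigma>\<^sub>2_sa: "mat_adj \<sigma>\<^sub>2 = \<sigma>\<^sub>2"
    and \<gamma>_skew: "mat_adj \<gamma> = - \<gamma>"
    and B_clin: "\<And>x. commutes_I iC2 I (blinfun_apply (B x))"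
    and C_clin: "\<And>x. commutes_I I iC2 (blinfun_apply (C x))"
    and X_clin: "\<And>x. commutes_I I I (blinfun_apply (X x))"
    and A_regular: "\<And>x e. B x (\<sigma>\<^sub>2 *v e) \<in> D"
    and B_deriv: "\<And>x. (B has_vector_derivative B' x) (at x)"
    and C_deriv: "\<And>x. (C has_vector_derivative C' x) (at x)"
    and X_deriv: "\<And>x. (X has_vector_derivative X' x) (at x)"
    and B'_eq: "\<And>x e. B' x e =
          - (A (B x (\<sigma>\<^sub>2 *v (matrix_inv \<sigma>\<^sub>1 *v e))) + B x (\<gamma> *v (matrix_inv \<sigma>\<^sub>1 *v e)))"
    and C'_eq: "\<And>x u. u \<in> D \<Longrightarrow> C' x u =
          matrix_inv \<sigma>\<^sub>1 *v (- (\<sigma>\<^sub>2 *v C x (A\<^sub>\<zeta> u)) + \<gamma> *v C x u)"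
    and X'_eq: "\<And>x u. X' x u = B x (\<sigma>\<^sub>2 *v C x u)"
    and X_dom: "\<And>x. X x ` D \<subseteq> D"
  shows "(lyapunov_eq A A\<^sub>\<zeta> D \<sigma>\<^sub>1 (B x\<^sub>0) (C x\<^sub>0) (X x\<^sub>0) \<longrightarrow>
            (\<forall>x. lyapunov_eq A A\<^sub>\<zeta> D \<sigma>\<^sub>1 (B x) (C x) (X x)))
       \<and> ((\<forall>x. invertible_node A A\<^sub>\<zeta> D \<sigma>\<^sub>1 (B x) (C x) (X x))
            \<and> inv_lyapunov_eq A A\<^sub>\<zeta> D \<sigma>\<^sub>1 (B x\<^sub>0) (C x\<^sub>0) (X x\<^sub>0) \<longrightarrow>
            (\<forall>x. inv_lyapunov_eq A A\<^sub>\<zeta> D \<sigma>\<^sub>1 (B x) (C x) (X x)))"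
proof (intro conjI impI allI)
  fix x
  assume "lyapunov_eq A A\<^sub>\<zeta> D \<sigma>\<^sub>1 (B x\<^sub>0) (C x\<^sub>0) (X x\<^sub>0)"
  with genA \<sigma>\<^sub>1_inv A_regular B_deriv C_deriv X_deriv B'_eq C'_eq X'_eq X_dom
  show "lyapunov_eq A A\<^sub>\<zeta> D \<sigma>\<^sub>1 (B x) (C x) (X x)"
    by (rule lyapunov_eq_propagates)
next
  fix x
  \<comment> \<open>An invertible node satisfies the Lyapunov equation by definition.\<close>
  assume "(\<forall>x. invertible_node A A\<^sub>\<zeta> D \<sigma>\<^sub>1 (B x) (C x) (X x))
            \<and> inv_lyapunov_eq A A\<^sub>\<zeta> D \<sigma>\<^sub>1 (B x\<^sub>0) (C x\<^sub>0) (X x\<^sub>0)"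
  then show "inv_lyapunov_eq A A\<^sub>\<zeta> D \<sigma>\<^sub>1 (B x) (C x) (X x)"
    unfolding invertible_node_def by (blast intro: inv_lyapunov_eq_of_lyapunov_eq)
qed

end
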